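(* For all integers $n\ge k\ge 1$, if $(G,I,O)$ is a geometry with $|V(G)|=n$ and $|O|=k$ which has a flow, then $|E(G)|\le kn-\binom{k+1}{2}$. Equivalently, $\Gamma(n,k)\le kn-\binom{k+1}{2}$.
   Context: Graphs are finite, simple, undirected, without self-loops; $v\sim w$ denotes adjacency. A geometry is $(G,I,O)$ with $I,O\subseteq V(G)$; $O^c=V(G)\setminus O$, $I^c=V(G)\setminus I$. A flow for $(G,I,O)$ is a pair $(f,\preceq)$, $f:O^c\to I^c$ a function, $\preceq$ a partial order on $V(G)$, such that for all $v\in O^c$, $w\in V(G)$: $v\sim f(v)$; $v\preceq f(v)$; $w\sim f(v)\Rightarrow v\preceq w$. $\Gamma(n,k)$ denotes the maximum number of edges of a graph $G$ in a geometry $(G,I,O)$ that has a flow, subject to $|V(G)|=n$ and $|O|=k$. *)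

theory Defs
  imports Main
begin

definition simple_graph :: "'a set \<Rightarrow> ('a \<Rightarrow> 'a \<Rightarrow> bool) \<Rightarrow> bool" where
  "simple_graph V E \<longleftrightarrow> finite V \<and> (\<forall>v w. E v w \<longrightarrow> v \<in> V \<and> w \<in> V)
     \<and> (\<forall>v w. E v w \<longrightarrow> E w v) \<and> (\<forall>v. \<not> E v v)"

definition edges :: "'a set \<Rightarrow> ('a \<Rightarrow> 'a \<Rightarrow> bool) \<Rightarrow> 'a set set" where
  "edges V E = {{v, w} | v w. v \<in> V \<and> w \<in> V \<and> E v w}"

definition is_flow :: "'a set \<Rightarrow> ('a \<Rightarrow> 'a \<Rightarrow> bool) \<Rightarrow> 'a set \<Rightarrow> 'a set
    \<Rightarrow> ('a \<Rightarrow> 'a) \<Rightarrow> 'a rel \<Rightarrow> bool" where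
  "is_flow V E Inp Out f r \<longleftrightarrow>
     partial_order_on V r \<and>
     (\<forall>v \<in> V - Out. f v \<in> V - Inp) \<and>
     (\<forall>v \<in> V - Out. E v (f v)) \<and>
     (\<forall>v \<in> V - Out. (v, f v) \<in> r) \<and>
     (\<forall>v \<in> V - Out. \<forall>w \<in> V. E w (f v) \<longrightarrow> (v, w) \<in> r)"

definition has_flow :: "'a set \<Rightarrow> ('a \<Rightarrow> 'a \<Rightarrow> bool) \<Rightarrow> 'a set \<Rightarrow> 'a set \<Rightarrow> bool" where
  "has_flow V E Inp Out \<longleftrightarrow> (\<exists>f r. is_flow V E Inp Out f r)"

end

theory Submission
  imports Defs
begin

text \<open>
  Let (f, r) be a flow for (G, I, O) and S = V - O, so |S| = n - k.
  We exhibit (n - k) choose 2 distinct unordered pairs {w, f v} with v, w in S and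
  (v, w) not in r; none of them is an edge, because w adjacent to f v would force
  (v, w) in r.  Hence the graph misses at least (n - k) choose 2 of the n choose 2
  pairs of vertices, and n choose 2 - (n - k) choose 2 = kn - (k + 1) choose 2.

  The pairs are counted by induction on S: remove an r-maximal vertex v from S;
  the pairs {w, f v} with w in S - {v} are new, since f is injective on V - O and
  f v is never below a vertex of S - {v}.
\<close>

lemma partial_order_has_maximal:
  assumes po: "partial_order_on V r" and fin: "finite V" and S: "S \<subseteq> V" "S \<noteq> {}"
  shows "\<exists>v\<in>S. \<forall>w\<in>S. (v, w) \<in> r \<longrightarrow> w = v"
proof -
  have "r\<inverse> \<subseteq> V \<times> V"
    using po by (auto simp: partial_order_on_def preorder_on_def refl_on_def)
  hence "finite (r\<inverse>)" by (rule finite_subset) (use fin in simp)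
  moreover have "partial_order_on V (r\<inverse>)" using po by simp
  ultimately have "wf (r\<inverse> - Id)" by (rule partial_order_on_well_order_on)
  then obtain v where "v \<in> S" "\<And>w. (w, v) \<in> r\<inverse> - Id \<Longrightarrow> w \<notin> S"
    using S(2) by (rule wfE_min') blast
  thus ?thesis by blast
qed

lemma edges_are_pairs:
  assumes "simple_graph V E"
  shows "edges V E \<subseteq> {A. A \<subseteq> V \<and> card A = 2}"
  using assms unfolding edges_def simple_graph_def by (auto simp: card_insert_if)

locale graph_flow =
  fixes V :: "'a set" and E :: "'a \<Rightarrow> 'a \<Rightarrow> bool" and Inp Out :: "'a set"
    and f :: "'a \<Rightarrow> 'a" and r :: "'a rel"
  assumes graph: "simple_graph V E" and flow: "is_flow V E Inp Out f r"
begin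

lemma finite_V: "finite V"
  using graph by (simp add: simple_graph_def)

lemma adjacent_in_V: "E v w \<Longrightarrow> v \<in> V \<and> w \<in> V"
  using graph by (simp add: simple_graph_def)

lemma adjacent_sym: "E v w \<Longrightarrow> E w v"
  using graph by (simp add: simple_graph_def)

lemma partial_order: "partial_order_on V r"
  using flow by (simp add: is_flow_def)

lemma f_in_V: "v \<in> V - Out \<Longrightarrow> f v \<in> V"
  using flow by (auto simp: is_flow_def)

lemma adjacent_f: "v \<in> V - Out \<Longrightarrow> E v (f v)"
  using flow by (simp add: is_flow_def)

lemma below_f: "v \<in> V - Out \<Longrightarrow> (v, f v) \<in> r"
  using flow by (simp add: is_flow_def)

lemma below_neighbours_of_f: "v \<in> V - Out \<Longrightarrow> E w (f v) \<Longrightarrow> (v, w) \<in> r"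
  using flow adjacent_in_V by (auto simp: is_flow_def)

text \<open>The flow function is injective: two vertices with the same image lie below
  each other, since each is a neighbour of that common image.\<close>
lemma f_inj: "inj_on f (V - Out)"
proof (rule inj_onI)
  fix u v assume u: "u \<in> V - Out" and v: "v \<in> V - Out" and eq: "f u = f v"
  have "(v, u) \<in> r" using below_neighbours_of_f[OF v] adjacent_f[OF u] eq by simp
  moreover have "(u, v) \<in> r" using below_neighbours_of_f[OF u] adjacent_f[OF v] eq by simp
  ultimately show "u = v"
    using partial_order by (auto simp: partial_order_on_def antisym_def)
qed

lemma non_edge_pair:
  assumes v: "v \<in> V - Out" and w: "w \<in> V" and vw: "(v, w) \<notin> r"
  shows "w \<noteq> f v" and "\<not> E w (f v)"
  using below_f[OF v] below_neighbours_of_f[OF v] vw by auto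

definition non_edge_pairs :: "'a set \<Rightarrow> 'a set set" where
  "non_edge_pairs S = {{w, f v} | v w. v \<in> S \<and> w \<in> S \<and> (v, w) \<notin> r}"

lemma finite_non_edge_pairs:
  assumes "finite S" shows "finite (non_edge_pairs S)"
proof (rule finite_subset)
  show "non_edge_pairs S \<subseteq> (\<lambda>(v, w). {w, f v}) ` (S \<times> S)"
    unfolding non_edge_pairs_def by auto
  show "finite ((\<lambda>(v, w). {w, f v}) ` (S \<times> S))" using assms by simp
qed

text \<open>Removing a maximal vertex v from S loses exactly the pairs {w, f v}, w in
  S - {v}; these are pairwise distinct and not among the pairs of S - {v}.\<close>
lemma non_edge_pairs_remove_maximal:
  assumes S: "S \<subseteq> V - Out" and v: "v \<in> S" and max: "\<forall>w\<in>S. (v, w) \<in> r \<longrightarrow> w = v"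
  shows "card (non_edge_pairs (S - {v})) + card (S - {v}) \<le> card (non_edge_pairs S)"
proof -
  let ?S' = "S - {v}" and ?C = "(\<lambda>w. {w, f v}) ` (S - {v})"
  have vV: "v \<in> V - Out" using S v by auto
  have not_above: "(v, w) \<notin> r" if "w \<in> ?S'" for w using max that by auto
  have finS: "finite S" using S finite_V finite_subset by blast
  have "inj_on (\<lambda>w. {w, f v}) ?S'"
    using non_edge_pair(1)[OF vV] not_above S by (auto intro!: inj_onI simp: doubleton_eq_iff)
  hence card_C: "card ?C = card ?S'" by (rule card_image)
  have disjoint: "non_edge_pairs ?S' \<inter> ?C = {}"
  proof (rule ccontr)
    assume "non_edge_pairs ?S' \<inter> ?C \<noteq> {}"
    then obtain u w w' where u: "u \<in> ?S'" and w: "w \<in> ?S'" and w': "w' \<in> ?S'"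
      and eq: "{w', f u} = {w, f v}"
      unfolding non_edge_pairs_def by blast
    have uV: "u \<in> V - Out" using u S by auto
    show False
    proof (cases "f u = f v")
      case True
      thus False using inj_onD[OF f_inj True uV vV] u by simp
    next
      case False
      hence "w' = f v" using eq by (auto simp: doubleton_eq_iff)
      thus False using not_above[OF w'] below_f[OF vV] by simp
    qed
  qed
  have "non_edge_pairs ?S' \<union> ?C \<subseteq> non_edge_pairs S"
    using not_above v unfolding non_edge_pairs_def by blast
  hence "card (non_edge_pairs ?S' \<union> ?C) \<le> card (non_edge_pairs S)"
    using finS by (intro card_mono finite_non_edge_pairs)
  moreover have "card (non_edge_pairs ?S' \<union> ?C) = card (non_edge_pairs ?S') + card ?C"
    using finS disjoint by (intro card_Un_disjoint finite_non_edge_pairs) auto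
  ultimately show ?thesis using card_C by simp
qed

lemma card_non_edge_pairs:
  "S \<subseteq> V - Out \<Longrightarrow> card S choose 2 \<le> card (non_edge_pairs S)"
proof (induction "card S" arbitrary: S)
  case 0
  thus ?case by (simp add: numeral_2_eq_2)
next
  case (Suc m)
  have "S \<subseteq> V" and "S \<noteq> {}" using Suc.prems Suc.hyps(2) by auto
  then obtain v where v: "v \<in> S" and max: "\<forall>w\<in>S. (v, w) \<in> r \<longrightarrow> w = v"
    using partial_order_has_maximal[OF partial_order finite_V] by blast
  have finS: "finite S" using Suc.prems finite_V finite_subset by blast
  have card_S': "card (S - {v}) = m" using Suc.hyps(2) v finS by simp
  have "S - {v} \<subseteq> V - Out" using Suc.prems by blast
  hence IH: "m choose 2 \<le> card (non_edge_pairs (S - {v}))"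
    by (rule Suc.hyps(1)[OF card_S'[symmetric], unfolded card_S'])
  have "card S choose 2 = (m choose 2) + m"
    unfolding Suc.hyps(2)[symmetric] by (simp add: numeral_2_eq_2)
  also have "\<dots> \<le> card (non_edge_pairs S)"
    using IH non_edge_pairs_remove_maximal[OF Suc.prems v max] unfolding card_S' by linarith
  finally show ?case .
qed

lemma non_edge_pairs_are_non_edges:
  "non_edge_pairs (V - Out) \<subseteq> {A. A \<subseteq> V \<and> card A = 2} - edges V E"
proof
  fix A assume "A \<in> non_edge_pairs (V - Out)"
  then obtain v w where v: "v \<in> V - Out" and w: "w \<in> V - Out" and vw: "(v, w) \<notin> r"
    and A: "A = {w, f v}"
    unfolding non_edge_pairs_def by blast
  have "A \<notin> edges V E"
    using non_edge_pair(2)[OF v _ vw] w adjacent_sym unfolding A edges_def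
    by (auto simp: doubleton_eq_iff)
  thus "A \<in> {A. A \<subseteq> V \<and> card A = 2} - edges V E"
    using non_edge_pair(1)[OF v _ vw] w f_in_V[OF v] A by auto
qed

text \<open>Edges and the pairs of non_edge_pairs (V - Out) are disjoint families of
  two-element vertex sets, so together there are at most (|V| choose 2) of them.\<close>
lemma edges_and_non_edges_bound:
  "card (edges V E) + card (non_edge_pairs (V - Out)) \<le> card V choose 2"
proof -
  let ?P = "{A. A \<subseteq> V \<and> card A = 2}" and ?N = "non_edge_pairs (V - Out)"
  have sub: "edges V E \<union> ?N \<subseteq> ?P"
    using edges_are_pairs[OF graph] non_edge_pairs_are_non_edges by blast
  have fin: "finite ?P" using finite_V by simp
  have "card (edges V E) + card ?N = card (edges V E \<union> ?N)"
    using non_edge_pairs_are_non_edges finite_subset[OF sub fin]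
    by (intro card_Un_disjoint[symmetric]) auto
  also have "\<dots> \<le> card ?P" using sub fin by (rule card_mono[rotated])
  also have "\<dots> = card V choose 2" using n_subsets[OF finite_V] by simp
  finally show ?thesis .
qed

end

lemma choose_two_difference:
  fixes n k :: nat
  assumes "k \<le> n"
  shows "int (n choose 2) = int ((n - k) choose 2) + int (k * n) - int ((k + 1) choose 2)"
proof -
  have double: "2 * int (m choose 2) = int m * (int m - 1)" for m :: nat
  proof -
    have "even (m * (m - 1))" by (cases "even m") auto
    hence "2 * (m choose 2) = m * (m - 1)" by (simp add: choose_two)
    hence "2 * int (m choose 2) = int (m * (m - 1))" by linarith
    thus ?thesis by (cases m) (auto simp: algebra_simps)
  qed
  have "2 * int (n choose 2) =
      2 * int ((n - k) choose 2) + 2 * int (k * n) - 2 * int ((k + 1) choose 2)"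
    unfolding double using assms by (simp add: of_nat_diff algebra_simps)
  thus ?thesis by simp
qed

theorem mainTheorem8:
  fixes V Inp Out :: "'a set" and E :: "'a \<Rightarrow> 'a \<Rightarrow> bool" and n k :: nat
  assumes "simple_graph V E"
    and "Inp \<subseteq> V" and "Out \<subseteq> V"
    and "card V = n" and "card Out = k"
    and "1 \<le> k" and "k \<le> n"
    and "has_flow V E Inp Out"
  shows "int (card (edges V E)) \<le> int (k * n) - int ((k + 1) choose 2)"
proof -
  obtain f r where "is_flow V E Inp Out f r" using assms(8) unfolding has_flow_def by blast
  then interpret graph_flow V E Inp Out f r using assms(1) by unfold_locales
  have "card (V - Out) = n - k"
    using assms(3-5) finite_V by (simp add: card_Diff_subset finite_subset)
  hence "(n - k) choose 2 \<le> card (non_edge_pairs (V - Out))"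
    using card_non_edge_pairs[of "V - Out"] by simp
  hence "card (edges V E) + ((n - k) choose 2) \<le> n choose 2"
    using edges_and_non_edges_bound unfolding assms(4) by linarith
  thus ?thesis using choose_two_difference[OF assms(7)] by linarith
qed

end
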